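(* Let $q$ be a prime power and let $4\le h\le k$ be integers. Let $s\ge 0$ and $r\ge 1$ be integers, let $i_1,\ldots,i_s$ be distinct indices in $\{1,\ldots,h\}$ and $j_1,\ldots,j_r$ distinct indices in $\{h+1,\ldots,k\}$, and let $a_{i_1},\ldots,a_{i_s},b_{j_1},\ldots,b_{j_r}\in\mathbb{F}_q^*$. Let $\Lambda$ be the number of $(x_1,\ldots,x_k)\in\mathbb{F}_q^k$ satisfying $$a_{i_1}x_{i_1}+\cdots+a_{i_s}x_{i_s}+b_{j_1}x_{j_1}+\cdots+b_{j_r}x_{j_r}=0\quad\text{and}\quad (x_1+\cdots+x_h)\,x_1x_2\cdots x_h=0.$$ Then $$\Lambda=q^{k-1}-q^{k-h-1}(q-1)^h+\psi_{h}q^{k-h-1}=q^{k-h-1}\bigl(q^h+\psi_{h}-(q-1)^h\bigr).$$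
   Context: For an integer $m\ge 0$, $\psi_m$ denotes the number of $(x_1,\ldots,x_m)\in\mathbb{F}_q^m$ with $\sum_{i=1}^m x_i=0$ and $x_i\neq 0$ for all $i$ (so $\psi_0=1$). *)

theory Defs
  imports Main "HOL-Library.FuncSet" "HOL-Library.Cardinality"
begin

definition psi :: "'a::{finite,field} itself \<Rightarrow> nat \<Rightarrow> nat" where
  "psi _ m = card {x \<in> {1..m} \<rightarrow>\<^sub>E (UNIV::'a set).
                    (\<Sum>i\<in>{1..m}. x i) = 0 \<and> (\<forall>i\<in>{1..m}. x i \<noteq> 0)}"

end

theory Submission
  imports Defs
begin

text \<open>Since some \<open>b\<^sub>j\<close> with \<open>j > h\<close> is nonzero, the linear equation determines \<open>x\<^sub>j\<close>
  uniquely from the other coordinates, and neither it nor the second condition constrains the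
  remaining \<open>k - h - 1\<close> coordinates outside \<open>{1..h}\<close>. Hence \<open>\<Lambda>\<close> is \<open>q^(k-h-1)\<close> times the number of
  \<open>y \<in> \<bbbF>\<^sub>q\<^sup>h\<close> with \<open>(y\<^sub>1 + \<dots> + y\<^sub>h) y\<^sub>1 \<cdots> y\<^sub>h = 0\<close>. The complement of that set consists of the
  \<open>(q - 1)\<^sup>h\<close> vectors without zero entries, minus the \<open>\<psi>\<^sub>h\<close> of them whose entries sum to zero.\<close>

lemma card_PiE_insert_filter:
  assumes "finite K" and "finite A" and "j \<notin> K"
  shows "card {x \<in> insert j K \<rightarrow>\<^sub>E A. Q x} = (\<Sum>y\<in>K \<rightarrow>\<^sub>E A. card {t \<in> A. Q (y(j := t))})"
proof -
  let ?upd = "\<lambda>(y, t). y(j := t)"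
  let ?fibres = "SIGMA y:K \<rightarrow>\<^sub>E A. {t \<in> A. Q (y(j := t))}"
  have "inj_on ?upd ((K \<rightarrow>\<^sub>E A) \<times> A)"
    using inj_combinator[OF \<open>j \<notin> K\<close>, of "\<lambda>_. A"] by (auto simp: inj_on_def)
  then have "inj_on ?upd ?fibres"
    by (rule inj_on_subset) auto
  moreover have "{x \<in> insert j K \<rightarrow>\<^sub>E A. Q x} = ?upd ` ?fibres"
    by (auto simp: PiE_insert_eq[of j K] intro: PiE_fun_upd)
  ultimately have "card {x \<in> insert j K \<rightarrow>\<^sub>E A. Q x} = card ?fibres"
    by (simp add: card_image)
  also have "\<dots> = (\<Sum>y\<in>K \<rightarrow>\<^sub>E A. card {t \<in> A. Q (y(j := t))})"
    using assms by (simp add: finite_PiE)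
  finally show ?thesis .
qed

lemma card_PiE_insert_free_coordinate:
  assumes "finite K" and "finite A" and "j \<notin> K" and "\<And>x t. Q (x(j := t)) = Q x"
  shows "card {x \<in> insert j K \<rightarrow>\<^sub>E A. Q x} = card A * card {x \<in> K \<rightarrow>\<^sub>E A. Q x}"
proof -
  have "card {x \<in> insert j K \<rightarrow>\<^sub>E A. Q x} = (\<Sum>y\<in>K \<rightarrow>\<^sub>E A. if Q y then card A else 0)"
    using assms by (simp add: card_PiE_insert_filter)
      (intro sum.cong, simp_all)
  also have "\<dots> = card A * card {x \<in> K \<rightarrow>\<^sub>E A. Q x}"
    using sum.inter_filter[of "K \<rightarrow>\<^sub>E A" "\<lambda>_. card A" Q] assms
    by (simp add: finite_PiE mult.commute)
  finally show ?thesis .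
qed

lemma card_PiE_insert_determined_coordinate:
  assumes "finite K" and "finite A" and "j \<notin> K"
    and "\<And>y. y \<in> K \<rightarrow>\<^sub>E A \<Longrightarrow> \<exists>!t. t \<in> A \<and> E (y(j := t))"
    and "\<And>x t. P (x(j := t)) = P x"
  shows "card {x \<in> insert j K \<rightarrow>\<^sub>E A. E x \<and> P x} = card {x \<in> K \<rightarrow>\<^sub>E A. P x}"
proof -
  have fibre: "card {t \<in> A. E (y(j := t)) \<and> P (y(j := t))} = (if P y then 1 else 0)"
    if "y \<in> K \<rightarrow>\<^sub>E A" for y
  proof -
    from assms(4)[OF that] obtain t where "{t \<in> A. E (y(j := t))} = {t}"
      by blast
    then show ?thesis
      using assms(5) by simp
  qed
  have "card {x \<in> insert j K \<rightarrow>\<^sub>E A. E x \<and> P x} = (\<Sum>y\<in>K \<rightarrow>\<^sub>E A. if P y then 1 else 0)"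
    using assms fibre by (simp add: card_PiE_insert_filter)
  also have "\<dots> = card {x \<in> K \<rightarrow>\<^sub>E A. P x}"
    using sum.inter_filter[of "K \<rightarrow>\<^sub>E A" "\<lambda>_. 1::nat" P] assms by (simp add: finite_PiE)
  finally show ?thesis .
qed

lemma card_PiE_Un_free_coordinates:
  assumes "finite S" and "finite D" and "finite A" and "S \<inter> D = {}"
    and "\<And>x. Q (restrict x S) = Q x"
  shows "card {x \<in> S \<union> D \<rightarrow>\<^sub>E A. Q x} = card A ^ card D * card {x \<in> S \<rightarrow>\<^sub>E A. Q x}"
  using \<open>finite D\<close> \<open>S \<inter> D = {}\<close>
proof (induction D rule: finite_induct)
  case empty
  then show ?case by simp
next
  case (insert j D)
  have "j \<notin> S"
    using insert.prems by blast
  then have "Q (x(j := t)) = Q x" for x t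
    by (metis assms(5) restrict_fupd)
  then have "card {x \<in> insert j (S \<union> D) \<rightarrow>\<^sub>E A. Q x} = card A * card {x \<in> S \<union> D \<rightarrow>\<^sub>E A. Q x}"
    using insert assms by (intro card_PiE_insert_free_coordinate) auto
  then show ?case
    using insert by simp
qed

lemma ex1_solution_linear_equation:
  fixes a b :: "'i \<Rightarrow> 'a::field"
  assumes "finite J" and "j \<in> J" and "b j \<noteq> 0" and "j \<notin> I"
  shows "\<exists>!t. (\<Sum>i\<in>I. a i * (x(j := t)) i) + (\<Sum>i\<in>J. b i * (x(j := t)) i) = 0"
proof -
  define c where "c = (\<Sum>i\<in>I. a i * x i) + (\<Sum>i\<in>J - {j}. b i * x i)"
  have "(\<Sum>i\<in>I. a i * (x(j := t)) i) + (\<Sum>i\<in>J. b i * (x(j := t)) i) = b j * t + c" for t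
  proof -
    have "(\<Sum>i\<in>I. a i * (x(j := t)) i) = (\<Sum>i\<in>I. a i * x i)"
      using \<open>j \<notin> I\<close> by (intro sum.cong) auto
    moreover have "(\<Sum>i\<in>J. b i * (x(j := t)) i) = b j * t + (\<Sum>i\<in>J - {j}. b i * x i)"
      using assms(1,2) by (simp add: sum.remove)
    ultimately show ?thesis
      unfolding c_def by simp
  qed
  moreover have "\<exists>!t. b j * t + c = 0"
    using \<open>b j \<noteq> 0\<close> by (intro ex1I[of _ "- c / b j"]) (auto simp: field_simps add_eq_0_iff)
  ultimately show ?thesis
    by simp
qed

lemma card_sum_mult_prod_eq_zero:
  "int (card {y \<in> {1..n} \<rightarrow>\<^sub>E (UNIV::'a::{finite,field} set).
                (\<Sum>i\<in>{1..n}. y i) * (\<Prod>i\<in>{1..n}. y i) = 0})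
     = int CARD('a) ^ n - (int CARD('a) - 1) ^ n + int (psi TYPE('a) n)"
proof -
  define U where "U = {1..n} \<rightarrow>\<^sub>E (UNIV::'a set)"
  define Z where "Z = {y \<in> U. (\<Sum>i\<in>{1..n}. y i) * (\<Prod>i\<in>{1..n}. y i) = 0}"
  define N where "N = {1..n} \<rightarrow>\<^sub>E (UNIV - {0::'a})"
  define Psi where "Psi = {y \<in> {1..n} \<rightarrow>\<^sub>E (UNIV::'a set).
                             (\<Sum>i\<in>{1..n}. y i) = 0 \<and> (\<forall>i\<in>{1..n}. y i \<noteq> 0)}"
  have "finite U" "finite N"
    unfolding U_def N_def by (simp_all add: finite_PiE)
  have "Z \<subseteq> U" "Psi \<subseteq> N"
    unfolding Z_def Psi_def U_def N_def by auto
  have "U - Z = N - Psi"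
    unfolding U_def Z_def N_def Psi_def by (auto simp: PiE_iff)
  have "card U = CARD('a) ^ n" "card N = (CARD('a) - 1) ^ n" "card Psi = psi TYPE('a) n"
    unfolding U_def N_def Psi_def psi_def by (simp_all add: card_PiE card_Diff_subset)
  have "int (card Z) = int (card U) - int (card (U - Z))"
    using \<open>finite U\<close> \<open>Z \<subseteq> U\<close> by (simp add: card_Diff_subset finite_subset card_mono of_nat_diff)
  also have "int (card (U - Z)) = int (card N) - int (card Psi)"
    unfolding \<open>U - Z = N - Psi\<close>
    using \<open>finite N\<close> \<open>Psi \<subseteq> N\<close> by (simp add: card_Diff_subset finite_subset card_mono of_nat_diff)
  finally have "int (card Z) = int CARD('a) ^ n - (int CARD('a) - 1) ^ n + int (psi TYPE('a) n)"
    by (simp add: \<open>card U = _\<close> \<open>card N = _\<close> \<open>card Psi = _\<close> of_nat_diff Suc_leI)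
  then show ?thesis
    unfolding Z_def U_def .
qed

theorem proposition2p1:
  fixes h k :: nat and I J :: "nat set" and a b :: "nat \<Rightarrow> 'a::{finite,field}"
  assumes "4 \<le> h" and "h \<le> k"
    and "I \<subseteq> {1..h}" and "J \<subseteq> {h+1..k}" and "J \<noteq> {}"
    and "\<forall>i\<in>I. a i \<noteq> 0" and "\<forall>j\<in>J. b j \<noteq> 0"
  shows "int (card {x \<in> {1..k} \<rightarrow>\<^sub>E (UNIV::'a set).
              (\<Sum>i\<in>I. a i * x i) + (\<Sum>j\<in>J. b j * x j) = 0 \<and>
              (\<Sum>i\<in>{1..h}. x i) * (\<Prod>i\<in>{1..h}. x i) = 0})
         = int (CARD('a)) ^ (k - 1) - int (CARD('a)) ^ (k - h - 1) * (int (CARD('a)) - 1) ^ h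
           + int (psi TYPE('a) h) * int (CARD('a)) ^ (k - h - 1)
       \<and> int (CARD('a)) ^ (k - 1) - int (CARD('a)) ^ (k - h - 1) * (int (CARD('a)) - 1) ^ h
           + int (psi TYPE('a) h) * int (CARD('a)) ^ (k - h - 1)
         = int (CARD('a)) ^ (k - h - 1) *
           (int (CARD('a)) ^ h + int (psi TYPE('a) h) - (int (CARD('a)) - 1) ^ h)"
proof -
  let ?q = "int CARD('a)"
  let ?E = "\<lambda>x::nat \<Rightarrow> 'a. (\<Sum>i\<in>I. a i * x i) + (\<Sum>j\<in>J. b j * x j) = 0"
  let ?P = "\<lambda>x::nat \<Rightarrow> 'a. (\<Sum>i\<in>{1..h}. x i) * (\<Prod>i\<in>{1..h}. x i) = 0"
  obtain j0 where "j0 \<in> J"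
    using \<open>J \<noteq> {}\<close> by blast
  define D where "D = {h+1..k} - {j0}"
  have j0: "j0 \<in> {h+1..k}" "j0 \<notin> {1..h} \<union> D"
    using \<open>j0 \<in> J\<close> \<open>J \<subseteq> {h+1..k}\<close> unfolding D_def by auto
  then have "{1..k} = insert j0 ({1..h} \<union> D)" and "card D = k - h - 1"
    and "finite D" and "{1..h} \<inter> D = {}"
    unfolding D_def by auto
  have "card {x \<in> {1..k} \<rightarrow>\<^sub>E UNIV. ?E x \<and> ?P x} = card {x \<in> {1..h} \<union> D \<rightarrow>\<^sub>E UNIV. ?P x}"
    unfolding \<open>{1..k} = _\<close>
  proof (rule card_PiE_insert_determined_coordinate)
    have "finite J" and "j0 \<notin> I"
      using \<open>J \<subseteq> {h+1..k}\<close> \<open>I \<subseteq> {1..h}\<close> j0 by (auto intro: finite_subset)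
    then show "\<exists>!t. t \<in> UNIV \<and> ?E (y(j0 := t))" for y
      using ex1_solution_linear_equation[of J j0 b I a y] \<open>j0 \<in> J\<close> \<open>\<forall>j\<in>J. b j \<noteq> 0\<close>
      by simp
    show "?P (x(j0 := t)) = ?P x" for x t
      using j0 by (auto intro!: arg_cong2[where f = "\<lambda>u v. u * v = 0"] sum.cong prod.cong)
  qed (use j0 \<open>finite D\<close> in auto)
  also have "\<dots> = CARD('a) ^ (k - h - 1) * card {x \<in> {1..h} \<rightarrow>\<^sub>E UNIV. ?P x}"
    using card_PiE_Un_free_coordinates[of "{1..h}" D UNIV ?P]
      \<open>card D = _\<close> \<open>finite D\<close> \<open>{1..h} \<inter> D = {}\<close>
    by simp
  finally have "int (card {x \<in> {1..k} \<rightarrow>\<^sub>E UNIV. ?E x \<and> ?P x})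
      = ?q ^ (k - h - 1) * (?q ^ h - (?q - 1) ^ h + int (psi TYPE('a) h))"
    by (simp only: of_nat_mult of_nat_power card_sum_mult_prod_eq_zero)
  moreover have "?q ^ (k - 1) = ?q ^ (k - h - 1) * ?q ^ h"
    using j0 by (simp flip: power_add)
  ultimately show ?thesis
    by (simp add: algebra_simps)
qed

end
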